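(* Let $c_1>0$, $c_3>0$, $r_2>0$, $r_4>0$, $\tau>0$, and put \[ a_1=2\pi c_3\frac{2c_1}{c_1+c_3},\qquad a_2=2\pi c_3\frac{c_1-c_3}{c_1+c_3}. \] Define \[ A=\begin{pmatrix}-a_1r_2&0\\0&-(a_1-a_2)r_4\end{pmatrix},\quad B=\begin{pmatrix}0&-a_1r_4\\-a_1r_2&0\end{pmatrix},\quad C=\begin{pmatrix}0&0\\0&-a_2r_4\end{pmatrix}, \] and $\Delta(s)=sI-A-Be^{-\tau s}-Ce^{-2\tau s}$ for $s\in\mathbb{C}$, with $I$ the $2\times2$ identity. Let $\sigma=\{\lambda\in\mathbb{C}:\det\Delta(\lambda)=0\}$. Then (a) $0\in\sigma$ and $\lambda=0$ is a simple root of $\det\Delta(\lambda)=0$; (b) every $\lambda\in\sigma\setminus\{0\}$ satisfies $\Re(\lambda)<0$.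
   Context: In the physical model $c_i=\cos\theta_i/n_i$ with refractive indices $n_i>0$ and angles $\theta_i\in[0,\pi/2)$ related by Snell's law $n_1\sin\theta_1=n_3\sin\theta_3$; $\Delta(s)$ is the characteristic matrix of the delay differential system $\dot x(t)=Ax(t)+Bx(t-\tau)+Cx(t-2\tau)+h(t)$ in $\mathbb{R}^2$. Note $a_1-a_2=2\pi c_3$. *)

theory Defs
  imports "HOL-Analysis.Analysis"
begin

definition coef_a1 :: "real \<Rightarrow> real \<Rightarrow> real" where
  "coef_a1 c1 c3 = 2 * pi * c3 * (2 * c1 / (c1 + c3))"

definition coef_a2 :: "real \<Rightarrow> real \<Rightarrow> real" where
  "coef_a2 c1 c3 = 2 * pi * c3 * ((c1 - c3) / (c1 + c3))"

definition matA :: "real \<Rightarrow> real \<Rightarrow> real \<Rightarrow> real \<Rightarrow> real^2^2" where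
  "matA c1 c3 r2 r4 = (\<chi> i j.
     if i = 1 \<and> j = 1 then - coef_a1 c1 c3 * r2
     else if i = 2 \<and> j = 2 then - (coef_a1 c1 c3 - coef_a2 c1 c3) * r4
     else 0)"

definition matB :: "real \<Rightarrow> real \<Rightarrow> real \<Rightarrow> real \<Rightarrow> real^2^2" where
  "matB c1 c3 r2 r4 = (\<chi> i j.
     if i = 1 \<and> j = 2 then - coef_a1 c1 c3 * r4
     else if i = 2 \<and> j = 1 then - coef_a1 c1 c3 * r2
     else 0)"

definition matC :: "real \<Rightarrow> real \<Rightarrow> real \<Rightarrow> real \<Rightarrow> real^2^2" where
  "matC c1 c3 r2 r4 = (\<chi> i j.
     if i = 2 \<and> j = 2 then - coef_a2 c1 c3 * r4 else 0)"

definition charmat :: "real \<Rightarrow> real \<Rightarrow> real \<Rightarrow> real \<Rightarrow> real \<Rightarrow> complex \<Rightarrow> complex^2^2" where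
  "charmat c1 c3 r2 r4 \<tau> s = (\<chi> i j.
     s * (mat 1 :: complex^2^2) $ i $ j
     - complex_of_real (matA c1 c3 r2 r4 $ i $ j)
     - complex_of_real (matB c1 c3 r2 r4 $ i $ j) * exp (- complex_of_real \<tau> * s)
     - complex_of_real (matC c1 c3 r2 r4 $ i $ j) * exp (- 2 * complex_of_real \<tau> * s))"

definition char_spectrum :: "real \<Rightarrow> real \<Rightarrow> real \<Rightarrow> real \<Rightarrow> real \<Rightarrow> complex set" where
  "char_spectrum c1 c3 r2 r4 \<tau> = {z. det (charmat c1 c3 r2 r4 \<tau> z) = 0}"

end

theory Submission
  imports Defs
begin

text \<open>
  With \<open>p = a\<^sub>1 r\<^sub>2\<close>, \<open>q = (a\<^sub>1 - a\<^sub>2) r\<^sub>4\<close> and \<open>t = -a\<^sub>2 r\<^sub>4\<close> the characteristic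
  determinant is the quasi-polynomial \<open>(s + p)(s + q) - exp(-2\<tau>s) (pq + ts)\<close>, and the
  hypotheses amount to \<open>p, q > 0\<close> and \<open>|t| < q\<close> (because \<open>|a\<^sub>2| < a\<^sub>1 - a\<^sub>2 = 2\<pi>c\<^sub>3\<close>).
  It vanishes at \<open>0\<close> with derivative \<open>p + q + 2\<tau>pq - t > 0\<close> there. In the closed right
  half-plane \<open>|exp(-2\<tau>s)| \<le> 1\<close>, while for \<open>s \<noteq> 0\<close> the bound \<open>|t| < q\<close> gives
  \<open>|pq + ts| < q |s + p| \<le> |s + q| |s + p|\<close>, so no other root lies there.
\<close>

definition char_quasipoly :: "real \<Rightarrow> real \<Rightarrow> real \<Rightarrow> real \<Rightarrow> complex \<Rightarrow> complex" where
  "char_quasipoly p q t h s =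
     (s + of_real p) * (s + of_real q) - exp (- of_real h * s) * (of_real (p * q) + of_real t * s)"

lemma norm_of_real_add_mult_less:
  fixes p u :: real and z :: complex
  assumes "p \<ge> 0" "\<bar>u\<bar> < 1" "Re z \<ge> 0" "z \<noteq> 0"
  shows "cmod (of_real p + of_real u * z) < cmod (z + of_real p)"
proof -
  have "u * Re z \<le> Re z"
    using mult_right_mono[of u 1 "Re z"] assms(2,3) by simp
  moreover have "u\<^sup>2 * (cmod z)\<^sup>2 < (cmod z)\<^sup>2"
    using assms(2,4) by (simp add: abs_square_less_1)
  moreover have "(cmod (of_real p + of_real u * z))\<^sup>2 = p\<^sup>2 + 2 * p * (u * Re z) + u\<^sup>2 * (cmod z)\<^sup>2"
    by (simp only: cmod_power2) (simp add: power2_eq_square algebra_simps)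
  moreover have "(cmod (z + of_real p))\<^sup>2 = p\<^sup>2 + 2 * p * Re z + (cmod z)\<^sup>2"
    by (simp only: cmod_power2) (simp add: power2_eq_square algebra_simps)
  ultimately have "(cmod (of_real p + of_real u * z))\<^sup>2 < (cmod (z + of_real p))\<^sup>2"
    using assms(1) mult_left_mono[of "u * Re z" "Re z" "2 * p"] by linarith
  then show ?thesis
    by (rule power_less_imp_less_base) simp
qed

lemma norm_linear_less_norm_quadratic:
  fixes p q t :: real and z :: complex
  assumes "p \<ge> 0" "q > 0" "\<bar>t\<bar> < q" "Re z \<ge> 0" "z \<noteq> 0"
  shows "cmod (of_real (p * q) + of_real t * z) < cmod ((z + of_real p) * (z + of_real q))"
proof -
  have "of_real (p * q) + of_real t * z = of_real q * (of_real p + of_real (t / q) * z)"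
    using assms(2) by (simp add: algebra_simps)
  then have "cmod (of_real (p * q) + of_real t * z) = q * cmod (of_real p + of_real (t / q) * z)"
    using assms(2) by (simp add: norm_mult)
  also have "\<dots> < q * cmod (z + of_real p)"
    using assms by (intro mult_strict_left_mono norm_of_real_add_mult_less) auto
  also have "\<dots> \<le> cmod (z + of_real q) * cmod (z + of_real p)"
  proof (rule mult_right_mono)
    show "q \<le> cmod (z + of_real q)"
      using complex_Re_le_cmod[of "z + of_real q"] assms(4) by simp
  qed simp
  finally show ?thesis
    by (simp add: norm_mult mult.commute add.commute)
qed

lemma char_quasipoly_0: "char_quasipoly p q t h 0 = 0"
  by (simp add: char_quasipoly_def)

lemma deriv_char_quasipoly_0:
  "deriv (char_quasipoly p q t h) 0 = of_real (p + q + h * p * q - t)"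
proof (rule DERIV_imp_deriv)
  show "(char_quasipoly p q t h has_field_derivative of_real (p + q + h * p * q - t)) (at 0)"
    unfolding char_quasipoly_def
    by (auto intro!: derivative_eq_intros simp: algebra_simps)
qed

lemma char_quasipoly_roots_Re_neg:
  fixes p q t h :: real
  assumes "p \<ge> 0" "q > 0" "\<bar>t\<bar> < q" "h \<ge> 0"
    and "char_quasipoly p q t h z = 0" "z \<noteq> 0"
  shows "Re z < 0"
proof (rule ccontr)
  assume "\<not> Re z < 0"
  then have "Re z \<ge> 0" by simp
  have "(z + of_real p) * (z + of_real q) = exp (- of_real h * z) * (of_real (p * q) + of_real t * z)"
    using assms(5) by (simp add: char_quasipoly_def)
  then have "cmod ((z + of_real p) * (z + of_real q)) \<le> cmod (of_real (p * q) + of_real t * z)"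
    using \<open>Re z \<ge> 0\<close> assms(4)
    by (simp add: norm_mult mult_left_le_one_le mult_nonneg_nonneg)
  with norm_linear_less_norm_quadratic[OF assms(1-3) \<open>Re z \<ge> 0\<close> assms(6)] show False
    by simp
qed

lemma det_charmat:
  "det (charmat c1 c3 r2 r4 \<tau> s) =
     char_quasipoly (coef_a1 c1 c3 * r2) ((coef_a1 c1 c3 - coef_a2 c1 c3) * r4)
       (- coef_a2 c1 c3 * r4) (2 * \<tau>) s"
proof -
  have "exp (- 2 * of_real \<tau> * s) = exp (- of_real \<tau> * s) * exp (- of_real \<tau> * s)"
    by (simp add: algebra_simps flip: exp_add)
  then show ?thesis
    unfolding det_2 charmat_def matA_def matB_def matC_def char_quasipoly_def
    by (simp add: mat_def algebra_simps power2_eq_square)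
qed

lemma coef_a1_pos: "c1 > 0 \<Longrightarrow> c3 > 0 \<Longrightarrow> coef_a1 c1 c3 > 0"
  by (simp add: coef_a1_def)

lemma coef_a1_minus_a2:
  assumes "c1 + c3 \<noteq> 0"
  shows "coef_a1 c1 c3 - coef_a2 c1 c3 = 2 * pi * c3"
proof -
  have "coef_a1 c1 c3 - coef_a2 c1 c3 = 2 * pi * c3 * (2 * c1 / (c1 + c3) - (c1 - c3) / (c1 + c3))"
    by (simp add: coef_a1_def coef_a2_def right_diff_distrib)
  also have "2 * c1 / (c1 + c3) - (c1 - c3) / (c1 + c3) = 1"
    using assms by (simp flip: diff_divide_distrib)
  finally show ?thesis
    by simp
qed

lemma abs_coef_a2_less:
  assumes "c1 > 0" "c3 > 0"
  shows "\<bar>coef_a2 c1 c3\<bar> < coef_a1 c1 c3 - coef_a2 c1 c3"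
proof -
  have "\<bar>coef_a2 c1 c3\<bar> = 2 * pi * c3 * (\<bar>c1 - c3\<bar> / (c1 + c3))"
    using assms by (simp add: coef_a2_def abs_mult)
  also have "\<dots> < 2 * pi * c3 * 1"
    using assms by (intro mult_strict_left_mono) auto
  also have "\<dots> = coef_a1 c1 c3 - coef_a2 c1 c3"
    using assms by (simp add: coef_a1_minus_a2)
  finally show ?thesis .
qed

theorem lemma4:
  fixes c1 c3 r2 r4 \<tau> :: real
  assumes "c1 > 0" "c3 > 0" "r2 > 0" "r4 > 0" "\<tau> > 0"
  shows "0 \<in> char_spectrum c1 c3 r2 r4 \<tau>
         \<and> deriv (\<lambda>s. det (charmat c1 c3 r2 r4 \<tau> s)) 0 \<noteq> 0
         \<and> (\<forall>z \<in> char_spectrum c1 c3 r2 r4 \<tau> - {0}. Re z < 0)"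
proof -
  define p where "p = coef_a1 c1 c3 * r2"
  define q where "q = (coef_a1 c1 c3 - coef_a2 c1 c3) * r4"
  define t where "t = - coef_a2 c1 c3 * r4"
  have det_eq: "(\<lambda>s. det (charmat c1 c3 r2 r4 \<tau> s)) = char_quasipoly p q t (2 * \<tau>)"
    by (simp add: det_charmat p_def q_def t_def)
  have spectrum_eq: "char_spectrum c1 c3 r2 r4 \<tau> = {z. char_quasipoly p q t (2 * \<tau>) z = 0}"
    by (simp add: char_spectrum_def det_charmat p_def q_def t_def)
  have "p > 0"
    using assms by (simp add: p_def coef_a1_pos)
  have "\<bar>t\<bar> < q"
    using abs_coef_a2_less[OF assms(1,2)] assms(4) by (simp add: t_def q_def abs_mult)
  then have "q > 0"
    by linarith
  have "2 * \<tau> * p * q > 0"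
    using \<open>p > 0\<close> \<open>q > 0\<close> assms(5) by simp
  then have "p + q + 2 * \<tau> * p * q - t \<noteq> 0"
    using \<open>p > 0\<close> \<open>\<bar>t\<bar> < q\<close> by linarith
  then have "deriv (\<lambda>s. det (charmat c1 c3 r2 r4 \<tau> s)) 0 \<noteq> 0"
    unfolding det_eq deriv_char_quasipoly_0 of_real_eq_0_iff .
  moreover have "Re z < 0" if "z \<in> char_spectrum c1 c3 r2 r4 \<tau> - {0}" for z
    using char_quasipoly_roots_Re_neg[OF less_imp_le[OF \<open>p > 0\<close>] \<open>q > 0\<close> \<open>\<bar>t\<bar> < q\<close>, of "2 * \<tau>"] that assms(5)
    by (simp add: spectrum_eq)
  ultimately show ?thesis
    by (simp add: spectrum_eq char_quasipoly_0)
qed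

end
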